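(* Let $H(\mathbb C)$ be the Fréchet space of entire functions with the topology of uniform convergence on compact sets, let $\phi$ be an entire function, and let $C_\phi:H(\mathbb C)\to H(\mathbb C)$, $C_\phi f=f\circ\phi$. Then $C_\phi$ is recurrent if and only if $\phi(z)=az+b$ for some $a,b\in\mathbb C$ with $|a|=1$.
   Context: A continuous linear operator $T$ on a Fréchet space $Y$ is recurrent if for every non-empty open $U\subset Y$ there is a positive integer $k$ with $U\cap T^{-k}(U)\neq\emptyset$. *)

theory Defs
  imports "HOL-Complex_Analysis.Complex_Analysis"
begin

definition entire_fns :: "(complex \<Rightarrow> complex) set" where
  "entire_fns = {f. f holomorphic_on UNIV}"

definition ucc_open :: "(complex \<Rightarrow> complex) set \<Rightarrow> bool" where
  "ucc_open U \<longleftrightarrow> U \<subseteq> entire_fns \<and>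
     (\<forall>f\<in>U. \<exists>K e. compact K \<and> e > 0 \<and>
        {g \<in> entire_fns. \<forall>z\<in>K. cmod (g z - f z) < e} \<subseteq> U)"

lemma ucc_openD:
  assumes "ucc_open U" "f \<in> U"
  obtains K e where "compact K" "e > 0" "{g \<in> entire_fns. \<forall>z\<in>K. cmod (g z - f z) < e} \<subseteq> U"
  using assms unfolding ucc_open_def by meson

lemma istopology_ucc_open: "istopology ucc_open"
  unfolding istopology_def
proof (intro conjI allI impI)
  fix S T assume S: "ucc_open S" and T: "ucc_open T"
  show "ucc_open (S \<inter> T)"
    unfolding ucc_open_def
  proof (intro conjI ballI)
    show "S \<inter> T \<subseteq> entire_fns" using S unfolding ucc_open_def by auto
  next
    fix f assume f: "f \<in> S \<inter> T"
    obtain K1 e1 where 1: "compact K1" "e1 > 0" "{g \<in> entire_fns. \<forall>z\<in>K1. cmod (g z - f z) < e1} \<subseteq> S"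
      using S f by (auto elim: ucc_openD)
    obtain K2 e2 where 2: "compact K2" "e2 > 0" "{g \<in> entire_fns. \<forall>z\<in>K2. cmod (g z - f z) < e2} \<subseteq> T"
      using T f by (auto elim: ucc_openD)
    show "\<exists>K e. compact K \<and> e > 0 \<and> {g \<in> entire_fns. \<forall>z\<in>K. cmod (g z - f z) < e} \<subseteq> S \<inter> T"
    proof (intro exI conjI)
      show "compact (K1 \<union> K2)" using 1 2 by (simp add: compact_Un)
      show "min e1 e2 > 0" using 1 2 by simp
      show "{g \<in> entire_fns. \<forall>z\<in>K1 \<union> K2. cmod (g z - f z) < min e1 e2} \<subseteq> S \<inter> T"
      proof
        fix g assume g: "g \<in> {g \<in> entire_fns. \<forall>z\<in>K1 \<union> K2. cmod (g z - f z) < min e1 e2}"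
        then have "g \<in> {g \<in> entire_fns. \<forall>z\<in>K1. cmod (g z - f z) < e1}"
             "g \<in> {g \<in> entire_fns. \<forall>z\<in>K2. cmod (g z - f z) < e2}" by auto
        then show "g \<in> S \<inter> T" using 1(3) 2(3) by (meson IntI subsetD)
      qed
    qed
  qed
next
  fix K assume K: "\<forall>S\<in>K. ucc_open S"
  show "ucc_open (\<Union>K)"
    unfolding ucc_open_def
  proof (intro conjI ballI)
    show "\<Union>K \<subseteq> entire_fns" using K unfolding ucc_open_def by auto
  next
    fix f assume "f \<in> \<Union>K"
    then obtain S where S: "S \<in> K" "f \<in> S" by auto
    then have "ucc_open S" using K by auto
    then obtain C e where "compact C" "e > 0" "{g \<in> entire_fns. \<forall>z\<in>C. cmod (g z - f z) < e} \<subseteq> S"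
      using S(2) by (rule ucc_openD)
    moreover have "S \<subseteq> \<Union>K" using S(1) by auto
    ultimately show "\<exists>C e. compact C \<and> e > 0 \<and> {g \<in> entire_fns. \<forall>z\<in>C. cmod (g z - f z) < e} \<subseteq> \<Union>K"
      by (meson order_trans)
  qed
qed

lemma openin_H_C: "openin (topology ucc_open) = ucc_open"
  using istopology_ucc_open by (rule topology_inverse')

definition H_C :: "(complex \<Rightarrow> complex) topology" where
  "H_C = topology ucc_open"

definition recurrent :: "'a topology \<Rightarrow> ('a \<Rightarrow> 'a) \<Rightarrow> bool" where
  "recurrent X T \<longleftrightarrow>
     (\<forall>U. openin X U \<and> U \<noteq> {} \<longrightarrow>
        (\<exists>k::nat. k > 0 \<and> U \<inter> {x \<in> topspace X. (T ^^ k) x \<in> U} \<noteq> {}))"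

definition comp_op :: "(complex \<Rightarrow> complex) \<Rightarrow> (complex \<Rightarrow> complex) \<Rightarrow> (complex \<Rightarrow> complex)" where
  "comp_op \<phi> f = f \<circ> \<phi>"

end

theory Submission
  imports Defs
begin

text \<open>
  If \<open>C\<^sub>\<phi>\<close> is recurrent then \<open>\<phi>\<close> is injective: if \<open>\<phi> z\<^sub>1 = \<phi> z\<^sub>2\<close> with \<open>z\<^sub>1 \<noteq> z\<^sub>2\<close>, every
  \<open>f \<circ> \<phi>\<^sup>k\<close> takes equal values at \<open>z\<^sub>1\<close> and \<open>z\<^sub>2\<close>, so it is never close to a function
  taking the values 0 and 1 there.
  By the great Picard theorem an injective entire function has no essential singularity
  at infinity, so it is a polynomial, and an injective polynomial has a nowhere vanishing,
  hence constant, derivative. For \<open>\<phi> z = a z + b\<close> with \<open>\<bar>a\<bar> \<noteq> 1\<close> the iterates contract or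
  expand a disc around the fixed point, so nothing near \<open>z \<mapsto> z - c\<close> returns.

  For a rotation (\<open>a \<noteq> 1\<close>) some power \<open>a\<^sup>k\<close> is close to 1, so
  \<open>\<phi>\<^sup>k\<close> is uniformly close to the identity on a given compact set. For a translation by
  \<open>b \<noteq> 0\<close>, the entire function \<open>q(z) = P/(2\<pi>i) (exp(2\<pi>iz/P) - 1)\<close> has period \<open>P = kb\<close>
  and is uniformly close to the identity on compact sets when \<open>k\<close> is large; then
  \<open>f = g \<circ> q\<close> is close to \<open>g\<close> and satisfies \<open>f \<circ> \<phi>\<^sup>k = f\<close>.
\<close>

lemma comp_op_funpow: "(comp_op \<phi> ^^ k) f = f \<circ> (\<phi> ^^ k)"
  by (induction k) (auto simp: comp_op_def funpow_swap1)

lemma holomorphic_on_funpow: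
  assumes "\<phi> holomorphic_on UNIV"
  shows "(\<phi> ^^ k) holomorphic_on UNIV"
proof (induction k)
  case (Suc k)
  then have "(\<phi> \<circ> (\<phi> ^^ k)) holomorphic_on UNIV"
    using assms by (intro holomorphic_on_compose) (auto intro: holomorphic_on_subset)
  then show ?case by (simp only: funpow.simps(2))
qed (simp add: id_def)

lemma funpow_affine_fixpoint:
  fixes a b c :: "'a::comm_ring_1"
  assumes "a * c + b = c"
  shows "((\<lambda>z. a * z + b) ^^ k) z = c + a ^ k * (z - c)"
proof (induction k)
  case (Suc k)
  have "((\<lambda>z. a * z + b) ^^ Suc k) z = a * (c + a ^ k * (z - c)) + b"
    using Suc by simp
  also have "\<dots> = (a * c + b) + a ^ Suc k * (z - c)"
    by (simp add: algebra_simps)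
  finally show ?case using assms by simp
qed simp

lemma funpow_translation: "((\<lambda>z. z + b) ^^ k) z = z + of_nat k * (b::'a::semiring_1)"
  by (induction k) (auto simp: algebra_simps)

lemma recurrent_H_C_iff:
  "recurrent H_C T \<longleftrightarrow> (\<forall>U. ucc_open U \<and> U \<noteq> {} \<longrightarrow> (\<exists>k>0. \<exists>f\<in>U. (T ^^ k) f \<in> U))"
proof -
  have openin: "openin H_C = ucc_open"
    unfolding H_C_def by (rule openin_H_C)
  then have "U \<subseteq> topspace H_C" if "ucc_open U" for U
    using openin_subset[of H_C U] that by simp
  then show ?thesis
    unfolding recurrent_def openin by blast
qed

lemma ucc_open_uniform_ball:
  assumes K: "compact K" and g: "continuous_on K g"
  shows "ucc_open {f \<in> entire_fns. \<forall>z\<in>K. cmod (f z - g z) < e}"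
  unfolding ucc_open_def
proof (intro conjI ballI)
  fix f assume f: "f \<in> {f \<in> entire_fns. \<forall>z\<in>K. cmod (f z - g z) < e}"
  show "\<exists>K' e'. compact K' \<and> e' > 0 \<and>
          {h \<in> entire_fns. \<forall>z\<in>K'. cmod (h z - f z) < e'} \<subseteq> {f \<in> entire_fns. \<forall>z\<in>K. cmod (f z - g z) < e}"
  proof (cases "K = {}")
    case True
    then show ?thesis by (intro exI[of _ K] exI[of _ 1]) (auto simp: K)
  next
    case False
    have "continuous_on K f"
      using f unfolding entire_fns_def
      by (auto intro: holomorphic_on_imp_continuous_on continuous_on_subset)
    then have "continuous_on K (\<lambda>z. cmod (f z - g z))"
      by (intro continuous_intros g)
    then obtain z0 where z0: "z0 \<in> K" and max: "\<And>z. z \<in> K \<Longrightarrow> cmod (f z - g z) \<le> cmod (f z0 - g z0)"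
      using continuous_attains_sup[OF K False] by blast
    define e' where "e' = e - cmod (f z0 - g z0)"
    have "e' > 0" using f z0 by (auto simp: e'_def)
    moreover have "cmod (h z - g z) < e"
      if "\<forall>z\<in>K. cmod (h z - f z) < e'" "z \<in> K" for h z
    proof -
      have "cmod (h z - g z) \<le> cmod (h z - f z) + cmod (f z - g z)"
        using norm_triangle_ineq[of "h z - f z" "f z - g z"] by simp
      also have "\<dots> < e" using that max[of z] by (force simp: e'_def)
      finally show ?thesis .
    qed
    ultimately show ?thesis using K by blast
  qed
qed auto

subsection \<open>Recurrence forces an affine symbol with unimodular slope\<close>

lemma recurrent_comp_op_imp_inj:
  assumes rec: "recurrent H_C (comp_op \<phi>)"
  shows "inj \<phi>"
proof (rule injI, rule ccontr)
  fix z1 z2 assume eq: "\<phi> z1 = \<phi> z2" and ne: "z1 \<noteq> z2"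
  define g where "g z = (z - z1) / (z2 - z1)" for z
  have g: "g holomorphic_on UNIV"
    unfolding g_def using ne by (intro holomorphic_intros) auto
  define U where "U = {f \<in> entire_fns. \<forall>z\<in>{z1, z2}. cmod (f z - g z) < 1/2}"
  have "ucc_open U"
    unfolding U_def using g
    by (intro ucc_open_uniform_ball) (auto intro: holomorphic_on_imp_continuous_on continuous_on_subset)
  moreover have "g \<in> U"
    unfolding U_def entire_fns_def using g by auto
  ultimately obtain k f where "k > 0" "f \<in> U" and fk: "(comp_op \<phi> ^^ k) f \<in> U"
    using rec unfolding recurrent_H_C_iff by blast
  obtain m where "k = Suc m" using \<open>k > 0\<close> gr0_conv_Suc by blast
  then have same: "(\<phi> ^^ k) z2 = (\<phi> ^^ k) z1"
    using eq by (simp only: funpow_Suc_right comp_apply)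
  have "g z1 = 0" "g z2 = 1" unfolding g_def using ne by auto
  then have "cmod (f ((\<phi> ^^ k) z1)) < 1/2" "cmod (f ((\<phi> ^^ k) z1) - 1) < 1/2"
    using fk same unfolding U_def comp_op_funpow by auto
  moreover have "1 \<le> cmod (f ((\<phi> ^^ k) z1)) + cmod (f ((\<phi> ^^ k) z1) - 1)"
    using norm_triangle_ineq4[of "f ((\<phi> ^^ k) z1)" "f ((\<phi> ^^ k) z1) - 1"] by simp
  ultimately show False by simp
qed

lemma has_field_derivative_const_imp_affine:
  assumes "\<And>z. (\<phi> has_field_derivative a) (at z)"
  shows "\<phi> z = a * z + \<phi> 0"
proof -
  have "((\<lambda>z. \<phi> z - a * z) has_field_derivative 0) (at z within UNIV)" for z
    using assms[of z] by (auto intro!: derivative_eq_intros)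
  then obtain c where "\<forall>z. \<phi> z - a * z = c"
    using has_field_derivative_zero_constant[of UNIV "\<lambda>z. \<phi> z - a * z"] by auto
  then show ?thesis by (metis add.commute diff_eq_eq mult_zero_right diff_zero)
qed

lemma inj_polyfun_imp_affine:
  fixes c :: "nat \<Rightarrow> complex"
  assumes \<phi>: "\<And>z. \<phi> z = (\<Sum>i\<le>n. c i * z ^ i)" and inj: "inj \<phi>"
  obtains a b where "\<And>z. \<phi> z = a * z + b"
proof (cases n)
  case 0
  then have "\<phi> 0 = \<phi> 1" using \<phi> by simp
  with inj have "(0::complex) = 1" by (rule injD)
  then show ?thesis by simp
next
  case (Suc m)
  define d where "d i = of_nat (Suc i) * c (Suc i)" for i
  have \<phi>_eq: "\<phi> = (\<lambda>z. \<Sum>i\<le>n. c i * z ^ i)" using \<phi> by auto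
  have deriv: "(\<phi> has_field_derivative (\<Sum>i\<le>m. d i * z ^ i)) (at z)" for z
  proof -
    have "(\<phi> has_field_derivative (\<Sum>i\<le>n. c i * (of_nat i * z ^ (i - 1)))) (at z)"
      unfolding \<phi>_eq by (auto intro!: derivative_eq_intros simp: mult_ac)
    also have "(\<Sum>i\<le>n. c i * (of_nat i * z ^ (i - 1))) = (\<Sum>i\<le>m. d i * z ^ i)"
      unfolding Suc sum.atMost_Suc_shift by (simp add: d_def mult_ac)
    finally show ?thesis .
  qed
  have "\<phi> holomorphic_on UNIV"
    unfolding \<phi>_eq by (intro holomorphic_intros)
  then have "(\<Sum>i\<le>m. d i * z ^ i) \<noteq> 0" for z
    using holomorphic_injective_imp_regular[of \<phi> UNIV z] inj DERIV_imp_deriv[OF deriv] by simp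
  then have "\<forall>i\<in>{1..m}. d i = 0"
    using fundamental_theorem_of_algebra[of d m] by blast
  then have "(\<Sum>i\<le>m. d i * z ^ i) = d 0" for z
    using polyfun_eq_const[of d m "d 0"] by auto
  then have "\<phi> z = d 0 * z + \<phi> 0" for z
    using deriv by (intro has_field_derivative_const_imp_affine) simp
  then show ?thesis using that by blast
qed

lemma inj_entire_tendsto_at_infinity:
  assumes holf: "\<phi> holomorphic_on UNIV" and inj: "inj \<phi>"
  obtains l where "(\<phi> \<longlongrightarrow> l) at_infinity" | l where "((inverse \<circ> \<phi>) \<longlongrightarrow> l) at_infinity"
proof -
  have False
    if ess: "\<And>l. \<not> ((\<phi> \<circ> inverse) \<longlongrightarrow> l) (at 0)"
            "\<And>l. \<not> ((inverse \<circ> (\<phi> \<circ> inverse)) \<longlongrightarrow> l) (at 0)"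
  proof -
    have hol: "(\<phi> \<circ> inverse) holomorphic_on ball 0 1 - {0}"
      by (intro holomorphic_on_compose holomorphic_intros holomorphic_on_subset[OF holf]) auto
    have "0 \<in> ball (0::complex) 1" by simp
    obtain a where "\<And>w. w \<noteq> a \<Longrightarrow> infinite {x \<in> ball 0 1 - {0}. (\<phi> \<circ> inverse) x = w}"
      using great_Picard_infinite[OF open_ball \<open>0 \<in> ball 0 1\<close> hol ess] by blast
    then have A: "infinite {x \<in> ball 0 1 - {0}. \<phi> (inverse x) = a + 1}" (is "infinite ?A")
      by simp
    then obtain x1 where "x1 \<in> ?A" using infinite_imp_nonempty by blast
    have "?A \<subseteq> {x1}"
    proof
      fix x assume "x \<in> ?A"
      then have "\<phi> (inverse x) = \<phi> (inverse x1)" using \<open>x1 \<in> ?A\<close> by simp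
      then have "inverse x = inverse x1" by (rule injD[OF inj])
      then show "x \<in> {x1}" by simp
    qed
    then show False using A finite_subset by blast
  qed
  then show ?thesis using that by (metis lim_at_infinity_0 o_assoc)
qed

lemma inj_entire_imp_affine:
  assumes holf: "\<phi> holomorphic_on UNIV" and inj: "inj \<phi>"
  obtains a b where "\<And>z. \<phi> z = a * z + b"
  using holf inj
proof (cases rule: inj_entire_tendsto_at_infinity)
  case (1 l)
  then have "\<phi> 0 = \<phi> 1" using Liouville_weak[OF holf] by metis
  with inj have "(0::complex) = 1" by (rule injD)
  then show ?thesis by simp
next
  case (2 l)
  then obtain c n where "\<And>z. \<phi> z = (\<Sum>i\<le>n. c i * z ^ i)"
    using pole_at_infinity[OF holf] by blast
  then show ?thesis using inj_polyfun_imp_affine inj that by blast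
qed

text \<open>
  Test recurrence on the neighbourhood of \<open>z \<mapsto> z - c\<close> on the unit disc around the fixed point
  \<open>c\<close>, comparing \<open>f\<close> and \<open>f \<circ> \<phi>\<^sup>k\<close> at \<open>c + a\<^sup>k w\<close> and \<open>c + w\<close>.
\<close>
lemma recurrent_comp_op_affine_power_near_id:
  assumes rec: "recurrent H_C (comp_op (\<lambda>z. a * z + b))" and "a \<noteq> 1" and "\<epsilon> > 0"
  obtains k where "k > 0" "\<And>w. cmod w \<le> 1 \<Longrightarrow> cmod (a ^ k * w) \<le> 1 \<Longrightarrow> cmod (a ^ k * w - w) < \<epsilon>"
proof -
  define c where "c = b / (1 - a)"
  have c_fixed: "a * c + b = c" using \<open>a \<noteq> 1\<close> unfolding c_def by (simp add: field_simps)
  define U where "U = {f \<in> entire_fns. \<forall>z\<in>cball c 1. cmod (f z - (z - c)) < \<epsilon> / 2}"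
  have "ucc_open U"
    unfolding U_def by (intro ucc_open_uniform_ball) (auto intro!: continuous_intros)
  moreover have "(\<lambda>z. z - c) \<in> U"
    unfolding U_def entire_fns_def using \<open>\<epsilon> > 0\<close> by (auto intro!: holomorphic_intros)
  ultimately obtain k f where k: "k > 0" and "f \<in> U" "(comp_op (\<lambda>z. a * z + b) ^^ k) f \<in> U"
    using rec unfolding recurrent_H_C_iff by blast
  then have f: "cmod (f z - (z - c)) < \<epsilon> / 2" and fk: "cmod (f (c + a ^ k * (z - c)) - (z - c)) < \<epsilon> / 2"
    if "z \<in> cball c 1" for z
    using that unfolding U_def comp_op_funpow funpow_affine_fixpoint[OF c_fixed] by auto
  have "cmod (a ^ k * w - w) < \<epsilon>" if "cmod w \<le> 1" "cmod (a ^ k * w) \<le> 1" for w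
  proof -
    have "cmod (f (c + a ^ k * w) - a ^ k * w) < \<epsilon> / 2" "cmod (f (c + a ^ k * w) - w) < \<epsilon> / 2"
      using f[of "c + a ^ k * w"] fk[of "c + w"] that by (auto simp: dist_norm)
    then show ?thesis
      using norm_triangle_ineq4[of "f (c + a ^ k * w) - w" "f (c + a ^ k * w) - a ^ k * w"] by simp
  qed
  then show ?thesis using that k by blast
qed

lemma recurrent_comp_op_affine_imp_unimodular:
  assumes rec: "recurrent H_C (comp_op (\<lambda>z. a * z + b))"
  shows "cmod a = 1"
proof (rule ccontr)
  assume a: "cmod a \<noteq> 1"
  then have "a \<noteq> 1" by auto
  show False
  proof (cases "cmod a < 1")
    case True
    then have "0 < 1 - cmod a" by simp
    obtain k where "k > 0"
      and ret: "\<And>w. cmod w \<le> 1 \<Longrightarrow> cmod (a ^ k * w) \<le> 1 \<Longrightarrow> cmod (a ^ k * w - w) < 1 - cmod a"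
      using recurrent_comp_op_affine_power_near_id[OF rec \<open>a \<noteq> 1\<close> \<open>0 < 1 - cmod a\<close>] by blast
    have "cmod a ^ k \<le> cmod a ^ 1"
      using \<open>k > 0\<close> True by (intro power_decreasing) auto
    moreover have "1 - cmod (a ^ k) \<le> cmod (a ^ k - 1)"
      using norm_triangle_ineq2[of 1 "a ^ k"] by (simp add: norm_minus_commute)
    moreover have "cmod (a ^ k - 1) < 1 - cmod a"
      using ret[of 1] True \<open>cmod a ^ k \<le> cmod a ^ 1\<close> by (simp add: norm_power)
    ultimately show False by (simp add: norm_power)
  next
    case False
    with a have a1: "cmod a > 1" by simp
    then have "0 < 1 - 1 / cmod a" by (simp add: divide_less_eq_1)
    obtain k where "k > 0"
      and ret: "\<And>w. cmod w \<le> 1 \<Longrightarrow> cmod (a ^ k * w) \<le> 1 \<Longrightarrow> cmod (a ^ k * w - w) < 1 - 1 / cmod a"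
      using recurrent_comp_op_affine_power_near_id[OF rec \<open>a \<noteq> 1\<close> \<open>0 < 1 - 1 / cmod a\<close>] by blast
    define w where "w = inverse (a ^ k)"
    have "a \<noteq> 0" using a1 by auto
    then have "a ^ k * w = 1"
      by (simp add: w_def)
    have "cmod a ^ 1 \<le> cmod a ^ k"
      using \<open>k > 0\<close> a1 by (intro power_increasing) auto
    then have "inverse (cmod a ^ k) \<le> inverse (cmod a)"
      using a1 by (intro le_imp_inverse_le) auto
    then have w: "cmod w \<le> 1 / cmod a"
      by (simp add: w_def norm_inverse norm_power inverse_eq_divide norm_divide)
    then have "cmod (1 - w) < 1 - 1 / cmod a"
      using ret[of w] \<open>a ^ k * w = 1\<close> \<open>0 < 1 - 1 / cmod a\<close> by simp
    moreover have "1 - cmod w \<le> cmod (1 - w)"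
      using norm_triangle_ineq2[of 1 w] by simp
    ultimately show False using w by linarith
  qed
qed

subsection \<open>Unimodular affine symbols give recurrent operators\<close>

lemma uniformly_continuous_near_compact:
  fixes g :: "'a::euclidean_space \<Rightarrow> 'b::metric_space"
  assumes g: "continuous_on UNIV g" and K: "compact K" and "e > 0"
  obtains \<delta> where "\<delta> > 0" "\<And>z w. z \<in> K \<Longrightarrow> dist w z < \<delta> \<Longrightarrow> dist (g w) (g z) < e"
proof -
  obtain R where R: "K \<subseteq> ball 0 R"
    using bounded_subset_ballD[OF compact_imp_bounded[OF K]] by blast
  have "uniformly_continuous_on (cball 0 (R + 1)) g"
    using g by (intro compact_uniformly_continuous) (auto intro: continuous_on_subset)
  then obtain d where "d > 0"
    and d: "\<And>x x'. x \<in> cball 0 (R + 1) \<Longrightarrow> x' \<in> cball 0 (R + 1) \<Longrightarrow> dist x' x < d \<Longrightarrow> dist (g x') (g x) < e"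
    using uniformly_continuous_onE[OF _ \<open>e > 0\<close>] by blast
  have "dist (g w) (g z) < e" if "z \<in> K" "dist w z < min d 1" for z w
  proof (rule d)
    have "norm z < R" using R that(1) by auto
    moreover have "norm w \<le> norm z + dist w z"
      using norm_triangle_sub[of w z] by (simp add: dist_norm)
    ultimately show "z \<in> cball 0 (R + 1)" "w \<in> cball 0 (R + 1)"
      using that(2) by auto
  qed (use that in auto)
  moreover have "min d 1 > 0" using \<open>d > 0\<close> by simp
  ultimately show ?thesis using that by blast
qed

text \<open>Given \<open>g\<close> in an open set, \<open>f = g \<circ> q\<close> and \<open>f \<circ> \<phi>\<^sup>k\<close> are both close to \<open>g\<close>.\<close>
lemma recurrent_comp_opI:
  assumes \<phi>: "\<phi> holomorphic_on UNIV"
    and approx: "\<And>K \<delta>. compact K \<Longrightarrow> \<delta> > 0 \<Longrightarrow> \<exists>k>0. \<exists>q. q holomorphic_on UNIV \<and>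
                   (\<forall>z\<in>K. cmod (q z - z) < \<delta> \<and> cmod (q ((\<phi> ^^ k) z) - z) < \<delta>)"
  shows "recurrent H_C (comp_op \<phi>)"
  unfolding recurrent_H_C_iff
proof (intro allI impI)
  fix U assume U: "ucc_open U \<and> U \<noteq> {}"
  then obtain g where "g \<in> U" by blast
  then have g: "g holomorphic_on UNIV"
    using U unfolding ucc_open_def entire_fns_def by auto
  obtain K e where K: "compact K" "e > 0" and KU: "{h \<in> entire_fns. \<forall>z\<in>K. cmod (h z - g z) < e} \<subseteq> U"
    using ucc_openD[of U g] U \<open>g \<in> U\<close> by blast
  obtain \<delta> where "\<delta> > 0" and \<delta>: "\<And>z w. z \<in> K \<Longrightarrow> dist w z < \<delta> \<Longrightarrow> dist (g w) (g z) < e"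
    using uniformly_continuous_near_compact[OF holomorphic_on_imp_continuous_on[OF g] K] by blast
  obtain k q where "k > 0" and q: "q holomorphic_on UNIV"
    and close: "\<And>z. z \<in> K \<Longrightarrow> cmod (q z - z) < \<delta> \<and> cmod (q ((\<phi> ^^ k) z) - z) < \<delta>"
    using approx[OF K(1) \<open>\<delta> > 0\<close>] by blast
  have f: "g \<circ> q holomorphic_on UNIV"
    using holomorphic_on_compose[OF q holomorphic_on_subset[OF g]] by simp
  then have "g \<circ> q \<circ> (\<phi> ^^ k) holomorphic_on UNIV"
    using holomorphic_on_compose[OF holomorphic_on_funpow[OF \<phi>] holomorphic_on_subset[OF f]] by simp
  then have "g \<circ> q \<in> U" "g \<circ> q \<circ> (\<phi> ^^ k) \<in> U"
    using f close \<delta> by (auto intro!: KU[THEN subsetD] simp: entire_fns_def dist_norm)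
  then show "\<exists>k>0. \<exists>f\<in>U. (comp_op \<phi> ^^ k) f \<in> U"
    using \<open>k > 0\<close> unfolding comp_op_funpow by blast
qed

lemma unimodular_power_near_one:
  fixes a :: complex
  assumes a: "cmod a = 1" and "\<eta> > 0"
  obtains k where "k > 0" "cmod (a ^ k - 1) < \<eta>"
proof -
  have "bounded (range (\<lambda>n. a ^ n))"
    using a by (auto simp: bounded_iff norm_power)
  then obtain l r where r: "strict_mono (r :: nat \<Rightarrow> nat)" and lim: "((\<lambda>n. a ^ n) \<circ> r) \<longlonglongrightarrow> l"
    using bounded_imp_convergent_subsequence by blast
  from lim have "Cauchy ((\<lambda>n. a ^ n) \<circ> r)" by (rule LIMSEQ_imp_Cauchy)
  then obtain M where M: "dist (a ^ r (Suc M)) (a ^ r M) < \<eta>"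
    using \<open>\<eta> > 0\<close> unfolding Cauchy_def by (metis comp_apply le_Suc_eq order_refl)
  define k where "k = r (Suc M) - r M"
  have "r M < r (Suc M)" using r by (simp add: strict_mono_def)
  then have "a ^ r (Suc M) - a ^ r M = a ^ r M * (a ^ k - 1)"
    by (simp add: k_def algebra_simps flip: power_add)
  then have "cmod (a ^ k - 1) < \<eta>"
    using M a by (simp add: dist_norm norm_mult norm_power)
  moreover have "k > 0" using \<open>r M < r (Suc M)\<close> by (simp add: k_def)
  ultimately show ?thesis using that by blast
qed

lemma recurrent_comp_op_rotation:
  assumes a: "cmod a = 1" and "a \<noteq> 1"
  shows "recurrent H_C (comp_op (\<lambda>z. a * z + b))"
proof (rule recurrent_comp_opI)
  fix K :: "complex set" and \<delta> :: real
  assume K: "compact K" and "\<delta> > 0"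
  define c where "c = b / (1 - a)"
  have c_fixed: "a * c + b = c" using \<open>a \<noteq> 1\<close> unfolding c_def by (simp add: field_simps)
  obtain B where "B > 0" and B: "\<And>z. z \<in> K \<Longrightarrow> cmod (z - c) \<le> B"
    using compact_imp_bounded[OF compact_translation[OF K, of "- c"]] by (auto simp: bounded_pos)
  obtain k where "k > 0" and k: "cmod (a ^ k - 1) < \<delta> / B"
    using unimodular_power_near_one[OF a, of "\<delta> / B"] \<open>\<delta> > 0\<close> \<open>B > 0\<close> by auto
  have "cmod (((\<lambda>z. a * z + b) ^^ k) z - z) < \<delta>" if "z \<in> K" for z
  proof -
    have "cmod (((\<lambda>z. a * z + b) ^^ k) z - z) = cmod (a ^ k - 1) * cmod (z - c)"
      unfolding funpow_affine_fixpoint[OF c_fixed] by (simp add: algebra_simps flip: norm_mult)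
    also have "\<dots> \<le> cmod (a ^ k - 1) * B"
      using B[OF that] by (intro mult_left_mono) auto
    also have "\<dots> < \<delta>" using k \<open>B > 0\<close> by (simp add: field_simps)
    finally show ?thesis .
  qed
  then show "\<exists>k>0. \<exists>q. q holomorphic_on UNIV \<and>
      (\<forall>z\<in>K. cmod (q z - z) < \<delta> \<and> cmod (q (((\<lambda>z. a * z + b) ^^ k) z) - z) < \<delta>)"
    using \<open>k > 0\<close> \<open>\<delta> > 0\<close> by (intro exI[of _ k] conjI exI[of _ id]) auto
qed (intro holomorphic_intros)

definition periodic_near_id :: "complex \<Rightarrow> complex \<Rightarrow> complex" where
  "periodic_near_id P z = P / (2 * pi * \<i>) * (exp (2 * pi * \<i> * z / P) - 1)"

lemma periodic_near_id_add_period: "P \<noteq> 0 \<Longrightarrow> periodic_near_id P (z + P) = periodic_near_id P z"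
  unfolding periodic_near_id_def by (simp add: add_divide_distrib ring_distribs exp_add)

lemma holomorphic_periodic_near_id: "P \<noteq> 0 \<Longrightarrow> periodic_near_id P holomorphic_on UNIV"
  unfolding periodic_near_id_def by (intro holomorphic_intros) auto

lemma norm_exp_minus_1_minus_le:
  fixes w :: complex
  assumes "cmod w \<le> 1"
  shows "cmod (exp w - 1 - w) \<le> exp 1 * cmod w ^ 2"
proof -
  have "cmod (exp w - (\<Sum>i\<le>1. exp 0 * (w - 0) ^ i / fact i)) \<le> exp 1 * cmod (w - 0) ^ Suc 1 / fact 1"
  proof (rule field_Taylor[where f = "\<lambda>_. exp" and S = "cball 0 1"])
    show "cmod (exp x) \<le> exp 1" if "x \<in> cball 0 1" for x
      using that norm_exp[of x] by (smt (verit) exp_le_cancel_iff mem_cball_0)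
  qed (use assms in \<open>auto intro!: derivative_eq_intros\<close>)
  then show ?thesis by (simp add: eval_nat_numeral diff_diff_eq)
qed

lemma norm_periodic_near_id_minus_id:
  assumes "P \<noteq> 0" and "2 * pi * cmod z \<le> cmod P"
  shows "cmod (periodic_near_id P z - z) \<le> 2 * pi * exp 1 * cmod z ^ 2 / cmod P"
proof -
  define w where "w = 2 * pi * \<i> * z / P"
  have nw: "cmod w = 2 * pi * cmod z / cmod P"
    by (simp add: w_def norm_divide norm_mult)
  have "periodic_near_id P z - z = P / (2 * pi * \<i>) * (exp w - 1 - w)"
    unfolding periodic_near_id_def w_def using \<open>P \<noteq> 0\<close> by (simp add: field_simps)
  then have "cmod (periodic_near_id P z - z) = cmod P / (2 * pi) * cmod (exp w - 1 - w)"
    by (simp add: norm_mult norm_divide)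
  also have "\<dots> \<le> cmod P / (2 * pi) * (exp 1 * cmod w ^ 2)"
    using assms by (intro mult_left_mono norm_exp_minus_1_minus_le) (auto simp: nw)
  also have "\<dots> = 2 * pi * exp 1 * cmod z ^ 2 / cmod P"
    using \<open>P \<noteq> 0\<close> by (simp add: nw power2_eq_square field_simps)
  finally show ?thesis .
qed

lemma periodic_near_id_uniformly_close:
  assumes K: "compact K" and "\<delta> > 0"
  obtains N where "N > 0" "\<And>P z. N < cmod P \<Longrightarrow> z \<in> K \<Longrightarrow> cmod (periodic_near_id P z - z) < \<delta>"
proof -
  obtain R where "R > 0" and R: "\<And>z. z \<in> K \<Longrightarrow> cmod z \<le> R"
    using compact_imp_bounded[OF K] by (auto simp: bounded_pos)
  define N where "N = 2 * pi * R + 2 * pi * exp 1 * R ^ 2 / \<delta>"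
  have "2 * pi * exp 1 * R ^ 2 / \<delta> > 0" "2 * pi * R > 0"
    using \<open>\<delta> > 0\<close> \<open>R > 0\<close> by simp_all
  then have "N > 0" unfolding N_def by linarith
  moreover have "cmod (periodic_near_id P z - z) < \<delta>" if "N < cmod P" "z \<in> K" for P z
  proof -
    have "P \<noteq> 0" using \<open>N > 0\<close> that(1) by auto
    have "2 * pi * cmod z \<le> 2 * pi * R" using R[OF that(2)] by simp
    then have "2 * pi * cmod z \<le> cmod P"
      using that(1) \<open>2 * pi * exp 1 * R ^ 2 / \<delta> > 0\<close> unfolding N_def by linarith
    then have "cmod (periodic_near_id P z - z) \<le> 2 * pi * exp 1 * cmod z ^ 2 / cmod P"
      by (rule norm_periodic_near_id_minus_id[OF \<open>P \<noteq> 0\<close>])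
    also have "\<dots> \<le> 2 * pi * exp 1 * R ^ 2 / cmod P"
      using R[OF that(2)] by (intro divide_right_mono mult_left_mono power_mono) auto
    also have "\<dots> < \<delta>"
    proof -
      have "2 * pi * exp 1 * R ^ 2 / \<delta> < cmod P"
        using that(1) \<open>2 * pi * R > 0\<close> unfolding N_def by linarith
      then show ?thesis using \<open>\<delta> > 0\<close> \<open>P \<noteq> 0\<close> by (simp add: field_simps)
    qed
    finally show ?thesis .
  qed
  ultimately show ?thesis using that by blast
qed

lemma recurrent_comp_op_translation: "recurrent H_C (comp_op (\<lambda>z. z + b))"
proof (rule recurrent_comp_opI)
  fix K :: "complex set" and \<delta> :: real
  assume K: "compact K" and "\<delta> > 0"
  show "\<exists>k>0. \<exists>q. q holomorphic_on UNIV \<and>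
      (\<forall>z\<in>K. cmod (q z - z) < \<delta> \<and> cmod (q (((\<lambda>z. z + b) ^^ k) z) - z) < \<delta>)"
  proof (cases "b = 0")
    case True
    then show ?thesis using \<open>\<delta> > 0\<close> by (intro exI[of _ 1] conjI exI[of _ id]) auto
  next
    case False
    obtain N where "N > 0" and N: "\<And>P z. N < cmod P \<Longrightarrow> z \<in> K \<Longrightarrow> cmod (periodic_near_id P z - z) < \<delta>"
      using periodic_near_id_uniformly_close[OF K \<open>\<delta> > 0\<close>] by blast
    obtain k where k: "N < real k * cmod b"
      using reals_Archimedean3[of "cmod b"] False by auto
    define P where "P = of_nat k * b"
    have "N < cmod P" using k by (simp add: P_def norm_mult)
    then have "P \<noteq> 0" using \<open>N > 0\<close> by auto
    have "k > 0" using k \<open>N > 0\<close> by (auto intro: gr0I)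
    have "periodic_near_id P (((\<lambda>z. z + b) ^^ k) z) = periodic_near_id P z" for z
      using periodic_near_id_add_period[OF \<open>P \<noteq> 0\<close>] by (simp add: funpow_translation P_def)
    then show ?thesis
      using \<open>k > 0\<close> holomorphic_periodic_near_id[OF \<open>P \<noteq> 0\<close>] N[OF \<open>N < cmod P\<close>]
      by (intro exI[of _ k] conjI exI[of _ "periodic_near_id P"]) auto
  qed
qed (intro holomorphic_intros)

theorem theorem6p4:
  fixes \<phi> :: "complex \<Rightarrow> complex"
  assumes "\<phi> holomorphic_on UNIV"
  shows "recurrent H_C (comp_op \<phi>) \<longleftrightarrow> (\<exists>a b. cmod a = 1 \<and> (\<forall>z. \<phi> z = a * z + b))"
proof
  assume rec: "recurrent H_C (comp_op \<phi>)"
  obtain a b where \<phi>: "\<And>z. \<phi> z = a * z + b"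
    using inj_entire_imp_affine[OF assms recurrent_comp_op_imp_inj[OF rec]] by blast
  then have "\<phi> = (\<lambda>z. a * z + b)" by blast
  then have "cmod a = 1"
    using rec recurrent_comp_op_affine_imp_unimodular by blast
  with \<phi> show "\<exists>a b. cmod a = 1 \<and> (\<forall>z. \<phi> z = a * z + b)" by blast
next
  assume "\<exists>a b. cmod a = 1 \<and> (\<forall>z. \<phi> z = a * z + b)"
  then obtain a b where a: "cmod a = 1" and "\<phi> = (\<lambda>z. a * z + b)" by blast
  then show "recurrent H_C (comp_op \<phi>)"
    using recurrent_comp_op_translation[of b] recurrent_comp_op_rotation[OF a]
    by (cases "a = 1") auto
qed

end
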